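(* Under the standing assumptions and definitions in the context, let $\mathbf{x}^{(k)}\in\Gamma$ and let $\mathbf{x}^{(k+1)}=\arg\min_{\mathbf{x}\in\mathcal{F}(\mathbf{x}^{(k)})}J(\mathbf{x})$. Then $\nabla J(\mathbf{x}^{(k+1)})\cdot(\mathbf{x}^{(k)}-\mathbf{x}^{(k+1)})\ge0$. Moreover, if $J(\mathbf{x}^{(k+1)})=J(\mathbf{x}^{(k)})$, then $\mathbf{x}^{(k+1)}=\mathbf{x}^{(k)}$.
   Context: Problem: minimize $J(\mathbf{x})$ over $\mathbf{x}\in\Gamma\subset\mathbb{R}^n$, where (i) $J:\mathbb{R}^n\to\mathbb{R}^+$ is smooth and strictly convex; (ii) $\Gamma$ is connected and closed with piecewise smooth, non-self-intersecting boundary, and every point of $\Gamma$ lies in some $n$-dimensional convex polytope contained in $\Gamma$. Semi-convex decomposition: $\Gamma=\bigcap_{i=1}^N\Gamma_i$, $\Gamma_i=\{\mathbf{x}:\phi_i(\mathbf{x})\ge 0\}$, $\partial\Gamma_i=\{\mathbf{x}:\phi_i(\mathbf{x})=0\}$, where each $\phi_i:\mathbb{R}^n\to\mathbb{R}$ is continuous, piecewise smooth and semi-convex: there is a positive semidefinite $H_i^*$ such that $\mathbf{x}\mapsto\phi_i(\mathbf{x})+\frac12(\mathbf{x}-\mathbf{x}_0)^TH_i^*(\mathbf{x}-\mathbf{x}_0)$ is convex for every $\mathbf{x}_0$. One-sided directional derivative: $\partial_v\phi_i(\mathbf{x})=\lim_{a\to0^+}(\phi_i(\mathbf{x}+av)-\phi_i(\mathbf{x}))/a$.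 Sub-differential: $D\phi_i(\mathbf{x})=\{d\in\mathbb{R}^n: d\cdot v\le\partial_v\phi_i(\mathbf{x})\ \forall v\in\mathbb{R}^n\}$. It is assumed that: (1) $D\phi_i(\mathbf{x})\neq\{0\}$ for all $\mathbf{x}$; (2) $0\notin D\phi_i(\mathbf{x})$ if $\mathbf{x}\in\partial\Gamma_i$; (3) for any $\mathbf{x}$ with $I:=\{i:\phi_i(\mathbf{x})=0\}\ne\emptyset$ there is $v$ with $\partial_v\phi_i(\mathbf{x})<0$ for all $i\in I$. Optimal sub-gradients at a reference $\mathbf{x}^r$: a unit vector $v$ is a feasible search direction if for every $i$: $\phi_i(\mathbf{x}^r)>0$; or $\phi_i(\mathbf{x}^r)=0$ and some $d\in D\phi_i(\mathbf{x}^r)$ has $v\cdot d\ge0$; or $\phi_i(\mathbf{x}^r)<0$ and some $d\in D\phi_i(\mathbf{x}^r)$ has $v\cdot d>0$. Let $C(\mathbf{x}^r)$ be the set of these, and $v^*=\arg\min_{v\in C(\mathbf{x}^r)}\nabla J(\mathbf{x}^r)\cdot v$ (ties broken lexicographically). Let $DF_i=D\phi_i(\mathbf{x}^r)$ if $\phi_i(\mathbf{x}^r)>0$, $DF_i=\{d\in D\phi_i(\mathbf{x}^r):d\cdot v^*\ge0\}$ if $\phi_i(\mathbf{x}^r)=0$, $DF_i=\{d\in D\phi_i(\mathbf{x}^r):d\cdot v^*>0\}$ if $\phi_i(\mathbf{x}^r)<0$, and $\hat\nabla\phi_i(\mathbf{x}^r)=\arg\min_{d\in DF_i}\nabla J(\mathbf{x}^r)\cdot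 d/\|d\|$ (with $d/\|d\|:=0$ if $d=0$). Convex feasible set: $\mathcal{F}_i(\mathbf{x}^r)=\Gamma_i$ if $\phi_i$ is concave; $\mathcal{F}_i(\mathbf{x}^r)=\{\mathbf{x}:\phi_i(\mathbf{x}^r)+\hat\nabla\phi_i(\mathbf{x}^r)(\mathbf{x}-\mathbf{x}^r)\ge0\}$ if $\phi_i$ is convex; $\mathcal{F}_i(\mathbf{x}^r)=\{\mathbf{x}:\phi_i(\mathbf{x}^r)+\hat\nabla\phi_i(\mathbf{x}^r)(\mathbf{x}-\mathbf{x}^r)\ge\frac12(\mathbf{x}-\mathbf{x}^r)^TH_i^*(\mathbf{x}-\mathbf{x}^r)\}$ otherwise; $\mathcal{F}(\mathbf{x}^r)=\bigcap_{i=1}^N\mathcal{F}_i(\mathbf{x}^r)$. *)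

theory Defs
  imports "HOL-Analysis.Analysis"
begin

text \<open>Vectors live in real^'n; the index type is linearly ordered so that the
lexicographic tie-breaking rule makes sense (coordinates 1 < 2 < ... < n).\<close>

coinductive smooth_fun :: "(real^'n \<Rightarrow> real) \<Rightarrow> bool" where
  "(\<forall>x. f differentiable (at x)) \<Longrightarrow>
   (\<forall>i. smooth_fun (\<lambda>x. frechet_derivative f (at x) (axis i 1))) \<Longrightarrow> smooth_fun f"

definition grad :: "(real^'n \<Rightarrow> real) \<Rightarrow> real^'n \<Rightarrow> real^'n" where
  "grad f x = (\<chi> i. frechet_derivative f (at x) (axis i 1))"

definition strict_convex_on :: "'a::real_vector set \<Rightarrow> ('a \<Rightarrow> real) \<Rightarrow> bool" where
  "strict_convex_on S f \<longleftrightarrow>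
     (\<forall>x\<in>S. \<forall>y\<in>S. x \<noteq> y \<longrightarrow> (\<forall>u::real. 0 < u \<and> u < 1 \<longrightarrow>
        f ((1 - u) *\<^sub>R x + u *\<^sub>R y) < (1 - u) * f x + u * f y))"

definition dirderiv :: "(real^'n \<Rightarrow> real) \<Rightarrow> real^'n \<Rightarrow> real^'n \<Rightarrow> real" where
  "dirderiv \<phi> x v = Lim (at_right 0) (\<lambda>a. (\<phi> (x + a *\<^sub>R v) - \<phi> x) / a)"

definition subdiff :: "(real^'n \<Rightarrow> real) \<Rightarrow> real^'n \<Rightarrow> (real^'n) set" where
  "subdiff \<phi> x = {d. \<forall>v. d \<bullet> v \<le> dirderiv \<phi> x v}"

definition psd :: "real^'n^'n \<Rightarrow> bool" where
  "psd H \<longleftrightarrow> transpose H = H \<and> (\<forall>u. 0 \<le> u \<bullet> (H *v u))"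

definition semi_convex_with :: "(real^'n \<Rightarrow> real) \<Rightarrow> real^'n^'n \<Rightarrow> bool" where
  "semi_convex_with \<phi> H \<longleftrightarrow> psd H \<and>
     (\<forall>x0. convex_on UNIV (\<lambda>x. \<phi> x + (1/2) * ((x - x0) \<bullet> (H *v (x - x0)))))"

definition lex_less :: "(real^('n::{finite,linorder})) \<Rightarrow> real^('n::{finite,linorder}) \<Rightarrow> bool" where
  "lex_less u v \<longleftrightarrow> (\<exists>i. u $ i < v $ i \<and> (\<forall>j. j < i \<longrightarrow> u $ j = v $ j))"

definition feas_dirs :: "nat \<Rightarrow> (nat \<Rightarrow> real^('n::{finite,linorder}) \<Rightarrow> real) \<Rightarrow> real^('n::{finite,linorder}) \<Rightarrow> (real^('n::{finite,linorder})) set" where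
  "feas_dirs N \<phi> xr = {v. norm v = 1 \<and> (\<forall>i\<in>{1..N}.
       \<phi> i xr > 0
     \<or> (\<phi> i xr = 0 \<and> (\<exists>d\<in>subdiff (\<phi> i) xr. v \<bullet> d \<ge> 0))
     \<or> (\<phi> i xr < 0 \<and> (\<exists>d\<in>subdiff (\<phi> i) xr. v \<bullet> d > 0)))}"

definition opt_dir :: "nat \<Rightarrow> (nat \<Rightarrow> real^('n::{finite,linorder}) \<Rightarrow> real) \<Rightarrow> (real^('n::{finite,linorder}) \<Rightarrow> real)
     \<Rightarrow> real^('n::{finite,linorder}) \<Rightarrow> real^('n::{finite,linorder})" where
  "opt_dir N \<phi> J xr =
     (let C = feas_dirs N \<phi> xr;
          M = {v\<in>C. \<forall>w\<in>C. grad J xr \<bullet> v \<le> grad J xr \<bullet> w}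
      in THE v. v \<in> M \<and> (\<forall>w\<in>M. w \<noteq> v \<longrightarrow> lex_less v w))"

definition DF :: "nat \<Rightarrow> (nat \<Rightarrow> real^('n::{finite,linorder}) \<Rightarrow> real) \<Rightarrow> (real^('n::{finite,linorder}) \<Rightarrow> real)
     \<Rightarrow> real^('n::{finite,linorder}) \<Rightarrow> nat \<Rightarrow> (real^('n::{finite,linorder})) set" where
  "DF N \<phi> J xr i =
     (let vs = opt_dir N \<phi> J xr in
      if \<phi> i xr > 0 then subdiff (\<phi> i) xr
      else if \<phi> i xr = 0 then {d\<in>subdiff (\<phi> i) xr. d \<bullet> vs \<ge> 0}
      else {d\<in>subdiff (\<phi> i) xr. d \<bullet> vs > 0})"

text \<open>Optimal sub-gradient; d/|d| is sgn d (with sgn 0 = 0).\<close>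
definition opt_subgrad :: "nat \<Rightarrow> (nat \<Rightarrow> real^('n::{finite,linorder}) \<Rightarrow> real) \<Rightarrow> (real^('n::{finite,linorder}) \<Rightarrow> real)
     \<Rightarrow> real^('n::{finite,linorder}) \<Rightarrow> nat \<Rightarrow> real^('n::{finite,linorder})" where
  "opt_subgrad N \<phi> J xr i =
     (SOME d. d \<in> DF N \<phi> J xr i \<and>
        (\<forall>e\<in>DF N \<phi> J xr i. grad J xr \<bullet> sgn d \<le> grad J xr \<bullet> sgn e))"

definition Fi :: "nat \<Rightarrow> (nat \<Rightarrow> real^('n::{finite,linorder}) \<Rightarrow> real) \<Rightarrow> (nat \<Rightarrow> (real^'n::{finite,linorder})^('n::{finite,linorder}))
     \<Rightarrow> (real^('n::{finite,linorder}) \<Rightarrow> real) \<Rightarrow> real^('n::{finite,linorder}) \<Rightarrow> nat \<Rightarrow> (real^('n::{finite,linorder})) set" where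
  "Fi N \<phi> H J xr i =
     (if concave_on UNIV (\<phi> i) then {x. \<phi> i x \<ge> 0}
      else if convex_on UNIV (\<phi> i) then
        {x. \<phi> i xr + opt_subgrad N \<phi> J xr i \<bullet> (x - xr) \<ge> 0}
      else {x. \<phi> i xr + opt_subgrad N \<phi> J xr i \<bullet> (x - xr)
               \<ge> (1/2) * ((x - xr) \<bullet> (H i *v (x - xr)))})"

definition Fset :: "nat \<Rightarrow> (nat \<Rightarrow> real^('n::{finite,linorder}) \<Rightarrow> real) \<Rightarrow> (nat \<Rightarrow> (real^'n::{finite,linorder})^('n::{finite,linorder}))
     \<Rightarrow> (real^('n::{finite,linorder}) \<Rightarrow> real) \<Rightarrow> real^('n::{finite,linorder}) \<Rightarrow> (real^('n::{finite,linorder})) set" where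
  "Fset N \<phi> H J xr = (\<Inter>i\<in>{1..N}. Fi N \<phi> H J xr i)"

end

theory Submission
  imports Defs
begin

text \<open>Each \<open>\<F>\<^sub>i(x\<^sup>k)\<close> is a superlevel set of a concave function
(\<open>\<phi>\<^sub>i\<close> itself, an affine minorant, or an affine-minus-quadratic minorant),
so \<open>\<F>(x\<^sup>k)\<close> is convex, and it contains \<open>x\<^sup>k\<close> because
\<open>\<phi>\<^sub>i(x\<^sup>k) \<ge> 0\<close>. A minimiser of \<open>J\<close> over a convex set satisfies the
first-order condition towards every other point of the set, in particular towards
\<open>x\<^sup>k\<close>. If \<open>J\<close> takes the same value at two distinct feasible points, one of
which is a minimiser, strict convexity makes their midpoint strictly better.\<close>

lemma convex_sublevel:
  assumes "convex_on S f"
  shows "convex {x\<in>S. f x \<le> c}"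
  unfolding convex_def
proof (intro ballI allI impI)
  fix x y and u v :: real
  assume x: "x \<in> {x\<in>S. f x \<le> c}" and y: "y \<in> {x\<in>S. f x \<le> c}"
    and uv: "0 \<le> u" "0 \<le> v" "u + v = 1"
  have "f (u *\<^sub>R x + v *\<^sub>R y) \<le> max (f x) (f y)"
    using convex_lower[OF assms _ _ uv] x y by simp
  moreover have "u *\<^sub>R x + v *\<^sub>R y \<in> S"
    using convex_on_imp_convex[OF assms] x y uv unfolding convex_def by blast
  ultimately show "u *\<^sub>R x + v *\<^sub>R y \<in> {x\<in>S. f x \<le> c}" using x y by (auto split: if_splits)
qed

lemma convex_superlevel:
  assumes "concave_on S f"
  shows "convex {x\<in>S. c \<le> f x}"
  using convex_sublevel[of S "\<lambda>x. - f x" "- c"] assms by (simp add: concave_on_def)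

lemma concave_on_inner_affine:
  assumes "convex S"
  shows "concave_on S (\<lambda>x. a + d \<bullet> (x - c))"
  unfolding concave_on_iff
proof (intro conjI ballI allI impI)
  fix x y and u v :: real
  assume "u + v = 1"
  then have v: "v = 1 - u" by simp
  show "u * (a + d \<bullet> (x - c)) + v * (a + d \<bullet> (y - c))
      \<le> a + d \<bullet> (u *\<^sub>R x + v *\<^sub>R y - c)"
    unfolding v by (simp add: inner_diff_right inner_add_right algebra_simps)
qed (rule assms)

lemma convex_on_quadratic_form:
  fixes H :: "real^'n^'n"
  assumes nonneg: "\<And>w. 0 \<le> w \<bullet> (H *v w)"
  shows "convex_on UNIV (\<lambda>x. (x - c) \<bullet> (H *v (x - c)))"
  unfolding convex_on_def
proof (intro conjI ballI allI impI)
  fix x y :: "real^'n" and u v :: real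
  assume uv: "0 \<le> u" "0 \<le> v" "u + v = 1"
  define q where "q w = w \<bullet> (H *v w)" for w
  define a b where "a = x - c" and "b = y - c"
  have v: "v = 1 - u" using uv(3) by simp
  have point: "u *\<^sub>R x + v *\<^sub>R y - c = u *\<^sub>R a + v *\<^sub>R b"
    unfolding a_def b_def v by (simp add: algebra_simps)
  have gap: "u * q a + v * q b - q (u *\<^sub>R a + v *\<^sub>R b) = u * v * q (a - b)"
    unfolding q_def v
    by (simp add: algebra_simps matrix_vector_right_distrib)
  have "0 \<le> u * v * q (a - b)" using uv nonneg by (simp add: q_def)
  then show "(u *\<^sub>R x + v *\<^sub>R y - c) \<bullet> (H *v (u *\<^sub>R x + v *\<^sub>R y - c))
      \<le> u * ((x - c) \<bullet> (H *v (x - c))) + v * ((y - c) \<bullet> (H *v (y - c)))"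
    using gap unfolding point by (simp add: q_def a_def b_def)
qed simp

lemma convex_min_imp_derivative_nonneg:
  fixes f :: "'a::real_normed_vector \<Rightarrow> real"
  assumes deriv: "(f has_derivative f') (at x)"
    and S: "convex S" "x \<in> S" "y \<in> S"
    and min: "\<And>z. z \<in> S \<Longrightarrow> f x \<le> f z"
  shows "0 \<le> f' (y - x)"
proof (rule ccontr)
  assume neg: "\<not> 0 \<le> f' (y - x)"
  define g where "g = (\<lambda>t::real. f (x + t *\<^sub>R (y - x)))"
  have "((\<lambda>t. x + t *\<^sub>R (y - x)) has_derivative (\<lambda>t. t *\<^sub>R (y - x))) (at 0)"
    by (auto intro!: derivative_eq_intros)
  from has_derivative_compose[OF this, of f f'] deriv
  have "(g has_derivative (\<lambda>t. f' (t *\<^sub>R (y - x)))) (at 0)"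
    unfolding g_def by simp
  moreover have "(\<lambda>t. f' (t *\<^sub>R (y - x))) = (\<lambda>t. f' (y - x) * t)"
    using linear_scale[OF has_derivative_linear[OF deriv]] by (auto simp: mult.commute)
  ultimately have "(g has_real_derivative f' (y - x)) (at 0)"
    by (simp add: has_field_derivative_def)
  then obtain d where d: "0 < d" "\<And>h. 0 < h \<Longrightarrow> h < d \<Longrightarrow> g (0 + h) < g 0"
    using DERIV_neg_dec_right neg by (metis not_le)
  define t where "t = min (d/2) 1"
  have "g t < f x" using d unfolding t_def by (simp add: g_def)
  moreover have "x + t *\<^sub>R (y - x) \<in> S"
  proof -
    have "(1 - t) *\<^sub>R x + t *\<^sub>R y \<in> S"
      using S d(1) unfolding convex_def t_def by simp
    then show ?thesis by (simp add: algebra_simps)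
  qed
  ultimately show False using min unfolding g_def by fastforce
qed

lemma strict_convex_min_unique:
  assumes strict: "strict_convex_on T f" and S: "convex S" "S \<subseteq> T" "x \<in> S" "y \<in> S"
    and min: "\<And>z. z \<in> S \<Longrightarrow> f x \<le> f z" and eq: "f y = f x"
  shows "y = x"
proof (rule ccontr)
  assume "y \<noteq> x"
  moreover have "x \<in> T" "y \<in> T" using S by auto
  ultimately have "f ((1 - 1/2) *\<^sub>R x + (1/2) *\<^sub>R y) < (1 - 1/2) * f x + (1/2) * f y"
    using strict unfolding strict_convex_on_def by (metis field_sum_of_halves half_gt_zero
        less_add_same_cancel1 zero_less_one)
  moreover have "(1 - 1/2) *\<^sub>R x + (1/2) *\<^sub>R y \<in> S"
    using S unfolding convex_def by simp
  ultimately show False using min eq by fastforce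
qed

lemma grad_inner:
  assumes "J differentiable (at x)"
  shows "grad J x \<bullet> v = frechet_derivative J (at x) v"
proof -
  have lin: "linear (frechet_derivative J (at x))"
    using assms frechet_derivative_works has_derivative_linear by blast
  have "frechet_derivative J (at x) v
      = frechet_derivative J (at x) (\<Sum>i\<in>UNIV. v $ i *\<^sub>R axis i 1)"
    using basis_expansion[of v] by (simp add: scalar_mult_eq_scaleR)
  also have "\<dots> = (\<Sum>i\<in>UNIV. v $ i * frechet_derivative J (at x) (axis i 1))"
    by (simp add: linear_sum[OF lin] linear_scale[OF lin])
  finally show ?thesis unfolding grad_def inner_vec_def by (simp add: mult.commute)
qed

lemma convex_Fi:
  assumes "psd (H i)"
  shows "convex (Fi N \<phi> H J xr i)"
proof -
  define d where "d = opt_subgrad N \<phi> J xr i"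
  define m where "m x = \<phi> i xr + d \<bullet> (x - xr) - (1/2) * ((x - xr) \<bullet> (H i *v (x - xr)))" for x
  have "concave_on UNIV m"
    unfolding m_def using assms
    by (intro concave_on_diff concave_on_inner_affine convex_on_cmul convex_on_quadratic_form)
       (auto simp: psd_def)
  then have "convex {x. 0 \<le> m x}" using convex_superlevel[of UNIV m 0] by simp
  moreover have "{x. \<phi> i xr + d \<bullet> (x - xr) \<ge> 0} = {x. d \<bullet> x \<ge> d \<bullet> xr - \<phi> i xr}"
    by (auto simp: inner_diff_right)
  moreover have "convex {x. 0 \<le> \<phi> i x}" if "concave_on UNIV (\<phi> i)"
    using convex_superlevel[OF that, of 0] by simp
  ultimately show ?thesis
    unfolding Fi_def d_def[symmetric] m_def by (simp add: convex_halfspace_ge)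
qed

lemma convex_Fset:
  assumes "\<And>i. i \<in> {1..N} \<Longrightarrow> psd (H i)"
  shows "convex (Fset N \<phi> H J xr)"
  unfolding Fset_def using assms convex_Fi by (blast intro: convex_INT)

lemma self_mem_Fset:
  assumes "\<And>i. i \<in> {1..N} \<Longrightarrow> 0 \<le> \<phi> i xr"
  shows "xr \<in> Fset N \<phi> H J xr"
  using assms unfolding Fset_def Fi_def by auto

theorem lemma4p4:
  fixes J :: "real^('n::{finite,linorder}) \<Rightarrow> real"
    and \<Gamma> :: "(real^('n::{finite,linorder})) set"
    and N :: nat
    and \<phi> :: "nat \<Rightarrow> real^('n::{finite,linorder}) \<Rightarrow> real"
    and H :: "nat \<Rightarrow> (real^'n::{finite,linorder})^('n::{finite,linorder})"
    and xk xk1 :: "real^('n::{finite,linorder})"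
  assumes J_smooth: "smooth_fun J"
    and J_strict: "strict_convex_on UNIV J"
    and J_pos: "\<forall>x. J x \<ge> 0"
    and G_conn: "connected \<Gamma>"
    and G_closed: "closed \<Gamma>"
    and G_polytope: "\<forall>x\<in>\<Gamma>. \<exists>P. polytope P \<and> aff_dim P = int CARD('n) \<and> x \<in> P \<and> P \<subseteq> \<Gamma>"
    and G_decomp: "\<Gamma> = (\<Inter>i\<in>{1..N}. {x. \<phi> i x \<ge> 0})"
    and phi_cont: "\<forall>i\<in>{1..N}. continuous_on UNIV (\<phi> i)"
    and phi_semi: "\<forall>i\<in>{1..N}. semi_convex_with (\<phi> i) (H i)"
    and A1: "\<forall>i\<in>{1..N}. \<forall>x. subdiff (\<phi> i) x \<noteq> {0}"
    and A2: "\<forall>i\<in>{1..N}. \<forall>x. \<phi> i x = 0 \<longrightarrow> 0 \<notin> subdiff (\<phi> i) x"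
    and A3: "\<forall>x. {i\<in>{1..N}. \<phi> i x = 0} \<noteq> {} \<longrightarrow>
               (\<exists>v. \<forall>i\<in>{i\<in>{1..N}. \<phi> i x = 0}. dirderiv (\<phi> i) x v < 0)"
    and xk_in: "xk \<in> \<Gamma>"
    and xk1_min: "xk1 \<in> Fset N \<phi> H J xk \<and> (\<forall>x\<in>Fset N \<phi> H J xk. J xk1 \<le> J x)"
  shows "grad J xk1 \<bullet> (xk - xk1) \<ge> 0 \<and> (J xk1 = J xk \<longrightarrow> xk1 = xk)"
proof -
  let ?F = "Fset N \<phi> H J xk"
  have convex_F: "convex ?F"
    using phi_semi by (intro convex_Fset) (simp add: semi_convex_with_def)
  have xk_F: "xk \<in> ?F"
    using xk_in G_decomp by (intro self_mem_Fset) auto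
  have xk1_F: "xk1 \<in> ?F" and xk1_le: "\<And>x. x \<in> ?F \<Longrightarrow> J xk1 \<le> J x"
    using xk1_min by auto
  have J_diff: "J differentiable (at xk1)"
    using J_smooth by (cases rule: smooth_fun.cases) auto
  have "0 \<le> grad J xk1 \<bullet> (xk - xk1)"
    using convex_min_imp_derivative_nonneg[OF J_diff[unfolded frechet_derivative_works]
        convex_F xk1_F xk_F xk1_le]
    by (simp add: grad_inner[OF J_diff])
  moreover have "xk1 = xk" if "J xk1 = J xk"
    using strict_convex_min_unique[OF J_strict convex_F subset_UNIV xk1_F xk_F xk1_le] that
    by simp
  ultimately show ?thesis by blast
qed

end
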